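(* Let $p,m,n\ge1$, let $a_1,\dots,a_n\in\mathbb{C}$ be distinct, let $m_1,\dots,m_n\ge1$ be integers, and let $C_0,\dots,C_{m-1}$, $B_k^{(j)}$ be complex $p\times p$ matrices. Let $$R(\lambda)=I\lambda^m-C_{m-1}\lambda^{m-1}-\cdots-C_1\lambda-C_0+\sum_{j=1}^{n}\sum_{k=1}^{m_j}\frac{B_k^{(j)}}{(\lambda-a_j)^k},$$ let $\|\cdot\|$ be any induced matrix norm, and define the real rational function $$q(x)=x^m-\|C_{m-1}\|x^{m-1}-\cdots-\|C_1\|x-\|C_0\|-\sum_{j=1}^n\sum_{k=1}^{m_j}\frac{\|B_k^{(j)}\|}{(x-|a_j|)^k}.$$ If $\lambda_0$ is an eigenvalue of $R(\lambda)$ and $R$ is a real zero of $q$ with $|a_j|<R$ for all $j=1,\dots,n$, then $|\lambda_0|\le R$.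
   Context: A scalar $\lambda_0\in\mathbb{C}\setminus\{a_1,\dots,a_n\}$ is an eigenvalue of $R(\lambda)$ if there is a nonzero $v\in\mathbb{C}^p$ with $R(\lambda_0)v=0$. *)

theory Defs
  imports "HOL-Analysis.Analysis"
begin

definition is_vec_norm :: "(complex^'p \<Rightarrow> real) \<Rightarrow> bool" where
  "is_vec_norm N \<longleftrightarrow>
     (\<forall>x. 0 \<le> N x) \<and> (\<forall>x. N x = 0 \<longleftrightarrow> x = 0) \<and>
     (\<forall>c x. N (c *s x) = cmod c * N x) \<and> (\<forall>x y. N (x + y) \<le> N x + N y)"

definition induced_norm :: "(complex^'p \<Rightarrow> real) \<Rightarrow> complex^'p^'p \<Rightarrow> real" where
  "induced_norm N A = Sup {N (A *v v) | v. N v = 1}"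

definition mscale :: "complex \<Rightarrow> complex^'p^'p \<Rightarrow> complex^'p^'p" where
  "mscale c A = (\<chi> i j. c * A $ i $ j)"

definition Rmat :: "nat \<Rightarrow> (nat \<Rightarrow> complex^'p^'p) \<Rightarrow> nat \<Rightarrow> (nat \<Rightarrow> complex)
    \<Rightarrow> (nat \<Rightarrow> nat) \<Rightarrow> (nat \<Rightarrow> nat \<Rightarrow> complex^'p^'p) \<Rightarrow> complex \<Rightarrow> complex^'p^'p" where
  "Rmat m C n a mm B z =
     mscale (z ^ m) (mat 1) - (\<Sum>i<m. mscale (z ^ i) (C i))
     + (\<Sum>j=1..n. \<Sum>k=1..mm j. mscale (1 / (z - a j) ^ k) (B j k))"

definition is_eigenvalue_R :: "nat \<Rightarrow> (nat \<Rightarrow> complex^'p^'p) \<Rightarrow> nat \<Rightarrow> (nat \<Rightarrow> complex)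
    \<Rightarrow> (nat \<Rightarrow> nat) \<Rightarrow> (nat \<Rightarrow> nat \<Rightarrow> complex^'p^'p) \<Rightarrow> complex \<Rightarrow> bool" where
  "is_eigenvalue_R m C n a mm B z0 \<longleftrightarrow>
     z0 \<notin> a ` {1..n} \<and> (\<exists>v. v \<noteq> 0 \<and> Rmat m C n a mm B z0 *v v = 0)"

definition qfun :: "(complex^'p^'p \<Rightarrow> real) \<Rightarrow> nat \<Rightarrow> (nat \<Rightarrow> complex^'p^'p) \<Rightarrow> nat
    \<Rightarrow> (nat \<Rightarrow> complex) \<Rightarrow> (nat \<Rightarrow> nat) \<Rightarrow> (nat \<Rightarrow> nat \<Rightarrow> complex^'p^'p) \<Rightarrow> real \<Rightarrow> real" where
  "qfun nrm m C n a mm B x =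
     x ^ m - (\<Sum>i<m. nrm (C i) * x ^ i)
     - (\<Sum>j=1..n. \<Sum>k=1..mm j. nrm (B j k) / (x - cmod (a j)) ^ k)"

end

theory Submission
  imports Defs
begin

text \<open>
  Let \<open>v\<close> be an eigenvector for \<open>\<lambda>\<^sub>0\<close> and \<open>x = |\<lambda>\<^sub>0|\<close>. Solving \<open>R(\<lambda>\<^sub>0) v = 0\<close> for \<open>\<lambda>\<^sub>0\<^sup>m v\<close>
  and estimating every term with the induced norm, using \<open>|\<lambda>\<^sub>0 - a\<^sub>j| \<ge> x - |a\<^sub>j|\<close>, gives
  \<open>q(x) \<le> 0\<close> whenever \<open>x > |a\<^sub>j|\<close> for all \<open>j\<close>. On the other hand \<open>q\<close> is positive to the right of
  any root \<open>R > |a\<^sub>j|\<close>: for \<open>x = sR\<close> with \<open>s > 1\<close>, the polynomial part of the subtracted terms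
  grows at most by the factor \<open>s\<^sup>m\<^sup>-\<^sup>1\<close>, the pole part decreases, while \<open>x\<^sup>m\<close> grows by \<open>s\<^sup>m\<close>.
  The finite-dimensional norm equivalence is needed only to see that the induced norm is a
  finite supremum.
\<close>

lemma vec_norm_nonneg: "is_vec_norm N \<Longrightarrow> 0 \<le> N x"
  by (simp add: is_vec_norm_def)

lemma vec_norm_eq_0_iff: "is_vec_norm N \<Longrightarrow> N x = 0 \<longleftrightarrow> x = 0"
  by (simp add: is_vec_norm_def)

lemma vec_norm_zero: "is_vec_norm N \<Longrightarrow> N 0 = 0"
  by (simp add: is_vec_norm_def)

lemma vec_norm_pos: "is_vec_norm N \<Longrightarrow> x \<noteq> 0 \<Longrightarrow> 0 < N x"
  using vec_norm_nonneg vec_norm_eq_0_iff by (metis less_eq_real_def)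

lemma vec_norm_scale: "is_vec_norm N \<Longrightarrow> N (c *s x) = cmod c * N x"
  by (simp add: is_vec_norm_def)

lemma vec_norm_triangle: "is_vec_norm N \<Longrightarrow> N (x + y) \<le> N x + N y"
  by (simp add: is_vec_norm_def)

lemma vec_norm_uminus: "is_vec_norm N \<Longrightarrow> N (- x) = N x"
  using vec_norm_scale[of N "-1" x] by (simp add: vector_sneg_minus1[symmetric])

lemma vec_norm_diff_triangle: "is_vec_norm N \<Longrightarrow> N (x - y) \<le> N x + N y"
  using vec_norm_triangle[of N x "- y"] vec_norm_uminus[of N y] by simp

lemma vec_norm_sum_le:
  assumes "is_vec_norm N" and "\<And>i. i \<in> A \<Longrightarrow> N (f i) \<le> g i"
  shows "N (\<Sum>i\<in>A. f i) \<le> (\<Sum>i\<in>A. g i)"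
  using assms(2)
proof (induction A rule: infinite_finite_induct)
  case (insert i A)
  then show ?case
    using vec_norm_triangle[OF assms(1), of "f i" "sum f A"] by fastforce
qed (simp_all add: vec_norm_zero[OF assms(1)])

lemma vec_norm_le_norm:
  fixes N :: "complex^'n \<Rightarrow> real"
  assumes "is_vec_norm N"
  shows "\<exists>K\<ge>0. \<forall>x. N x \<le> K * norm x"
proof -
  define K where "K = (\<Sum>i\<in>UNIV. N (axis i 1 :: complex^'n))"
  have "N x \<le> K * norm x" for x :: "complex^'n"
  proof -
    have "N x = N (\<Sum>i\<in>UNIV. x $ i *s axis i 1)"
      by (simp add: basis_expansion)
    also have "\<dots> \<le> (\<Sum>i\<in>UNIV. norm x * N (axis i 1))"
      using Finite_Cartesian_Product.norm_nth_le[of x]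
      by (intro vec_norm_sum_le[OF assms])
        (simp add: vec_norm_scale[OF assms] mult_right_mono vec_norm_nonneg[OF assms])
    also have "\<dots> = K * norm x"
      by (simp add: K_def sum_distrib_left mult.commute)
    finally show ?thesis .
  qed
  moreover have "0 \<le> K"
    unfolding K_def by (intro sum_nonneg vec_norm_nonneg[OF assms])
  ultimately show ?thesis by blast
qed

lemma vec_norm_lipschitz:
  assumes "is_vec_norm N"
  shows "\<exists>K. K-lipschitz_on UNIV N"
proof -
  obtain K where "0 \<le> K" and K: "\<And>x. N x \<le> K * norm x"
    using vec_norm_le_norm[OF assms] by blast
  have "dist (N x) (N y) \<le> K * dist x y" for x y
  proof -
    have "N x \<le> N (x - y) + N y" and "N y \<le> N (x - y) + N x"
      using vec_norm_triangle[OF assms, of "x - y" y] vec_norm_diff_triangle[OF assms, of x "x - y"]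
      by simp_all
    then show ?thesis
      using K[of "x - y"] by (simp add: dist_real_def dist_norm)
  qed
  then show ?thesis
    using \<open>0 \<le> K\<close> by (auto intro: lipschitz_onI)
qed

lemma vec_norm_scaleR: "is_vec_norm N \<Longrightarrow> N (r *\<^sub>R x) = \<bar>r\<bar> * N x"
proof -
  have "r *\<^sub>R x = complex_of_real r *s x"
    by (simp only: vec_eq_iff vector_smult_component vector_scaleR_component)
      (simp add: scaleR_conv_of_real)
  then show "is_vec_norm N \<Longrightarrow> N (r *\<^sub>R x) = \<bar>r\<bar> * N x"
    by (simp add: vec_norm_scale)
qed

lemma vec_norm_ge_norm:
  fixes N :: "complex^'n \<Rightarrow> real"
  assumes "is_vec_norm N"
  shows "\<exists>c>0. \<forall>x. c * norm x \<le> N x"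
proof -
  obtain K where "K-lipschitz_on UNIV N"
    using vec_norm_lipschitz[OF assms] by blast
  then have "continuous_on (sphere 0 1) N"
    by (meson lipschitz_on_continuous_on lipschitz_on_subset subset_UNIV)
  moreover have "sphere (0 :: complex^'n) 1 \<noteq> {}"
    by simp
  ultimately obtain x0 where x0: "x0 \<in> sphere 0 1" "\<And>y. y \<in> sphere 0 1 \<Longrightarrow> N x0 \<le> N y"
    using continuous_attains_inf[OF compact_sphere] by blast
  have "N x0 * norm x \<le> N x" for x
  proof (cases "x = 0")
    case False
    then have "N x0 \<le> N ((1 / norm x) *\<^sub>R x)"
      using x0(2) by simp
    then show ?thesis
      using False by (simp add: vec_norm_scaleR[OF assms] field_simps)
  qed (simp add: vec_norm_zero[OF assms])
  moreover have "0 < N x0"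
    using x0(1) vec_norm_pos[OF assms, of x0] by fastforce
  ultimately show ?thesis by blast
qed

lemma induced_norm_bdd_above:
  assumes "is_vec_norm N"
  shows "bdd_above {N (A *v v) | v. N v = 1}"
proof -
  obtain K where "0 \<le> K" and K: "\<And>x. N x \<le> K * norm x"
    using vec_norm_le_norm[OF assms] by blast
  obtain c where "c > 0" and c: "\<And>x. c * norm x \<le> N x"
    using vec_norm_ge_norm[OF assms] by blast
  obtain M where "M > 0" and M: "\<And>x. norm (A *v x) \<le> norm x * M"
    using bounded_linear.pos_bounded[OF matrix_vector_mul_bounded_linear] by blast
  have "N (A *v v) \<le> K * (1 / c * M)" if "N v = 1" for v
  proof -
    have "norm v \<le> 1 / c"
      using c[of v] that \<open>c > 0\<close> by (simp add: field_simps)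
    have "N (A *v v) \<le> K * norm (A *v v)"
      by (rule K)
    also have "\<dots> \<le> K * (norm v * M)"
      using M \<open>0 \<le> K\<close> by (rule mult_left_mono)
    also have "\<dots> \<le> K * (1 / c * M)"
      using \<open>norm v \<le> 1 / c\<close> \<open>M > 0\<close> \<open>0 \<le> K\<close> by (intro mult_left_mono mult_right_mono) auto
    finally show ?thesis .
  qed
  then show ?thesis
    unfolding bdd_above_def by blast
qed

lemma induced_norm_bound:
  assumes "is_vec_norm N"
  shows "N (A *v v) \<le> induced_norm N A * N v"
proof (cases "v = 0")
  case False
  define u where "u = complex_of_real (1 / N v) *s v"
  have "0 < N v"
    using vec_norm_pos[OF assms False] .
  then have "N u = 1"
    by (simp add: u_def vec_norm_scale[OF assms] norm_divide)
  then have "N (A *v u) \<le> induced_norm N A"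
    unfolding induced_norm_def by (intro cSup_upper induced_norm_bdd_above[OF assms]) blast
  moreover have "N (A *v u) = N (A *v v) / N v"
    using \<open>0 < N v\<close> by (simp add: u_def vector_scalar_commute vec_norm_scale[OF assms] norm_divide)
  ultimately show ?thesis
    using \<open>0 < N v\<close> by (simp add: field_simps)
qed (simp add: vec_norm_zero[OF assms])

lemma induced_norm_nonneg:
  fixes N :: "complex^'n \<Rightarrow> real"
  assumes "is_vec_norm N"
  shows "0 \<le> induced_norm N A"
proof -
  let ?e = "axis undefined 1 :: complex^'n"
  have "0 \<le> induced_norm N A * N ?e"
    using induced_norm_bound[OF assms, of A ?e] vec_norm_nonneg[OF assms, of "A *v ?e"] by linarith
  moreover have "0 < N ?e"
    using vec_norm_pos[OF assms] by simp
  ultimately show ?thesis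
    by (simp add: zero_le_mult_iff)
qed

lemma mscale_mult_vec: "mscale c A *v v = c *s (A *v v)"
  by (simp add: vec_eq_iff matrix_vector_mult_def mscale_def sum_distrib_left mult.assoc)

lemma sum_matrix_vector_mult: "(\<Sum>i\<in>S. f i) *v v = (\<Sum>i\<in>S. f i *v v)"
  by (induction S rule: infinite_finite_induct) (simp_all add: matrix_vector_mult_add_rdistrib)

lemma Rmat_mult_vec:
  "Rmat m C n a mm B z *v v =
     z ^ m *s v - (\<Sum>i<m. z ^ i *s (C i *v v))
     + (\<Sum>j=1..n. \<Sum>k=1..mm j. (1 / (z - a j) ^ k) *s (B j k *v v))"
  by (simp add: Rmat_def matrix_vector_mult_add_rdistrib matrix_vector_mult_diff_rdistrib
      sum_matrix_vector_mult mscale_mult_vec)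

lemma pole_term_bound:
  assumes "is_vec_norm N" and "cmod a < cmod z"
  shows "N ((1 / (z - a) ^ k) *s (A *v v)) \<le> induced_norm N A / (cmod z - cmod a) ^ k * N v"
proof -
  have "0 < cmod z - cmod a" and "cmod z - cmod a \<le> cmod (z - a)"
    using assms(2) norm_triangle_ineq2[of z a] by auto
  then have "(cmod z - cmod a) ^ k \<le> cmod (z - a) ^ k" and "0 < (cmod z - cmod a) ^ k"
    by (simp_all add: power_mono)
  moreover have "0 \<le> induced_norm N A * N v"
    using induced_norm_nonneg[OF assms(1)] vec_norm_nonneg[OF assms(1)] by simp
  ultimately have "induced_norm N A * N v / cmod (z - a) ^ k
      \<le> induced_norm N A * N v / (cmod z - cmod a) ^ k"
    by (intro divide_left_mono) simp_all
  moreover have "N ((1 / (z - a) ^ k) *s (A *v v)) \<le> induced_norm N A * N v / cmod (z - a) ^ k"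
    using induced_norm_bound[OF assms(1), of A v]
    by (simp add: vec_norm_scale[OF assms(1)] norm_divide norm_power divide_right_mono)
  ultimately show ?thesis
    by simp
qed

lemma eigenvalue_qfun_nonpos:
  assumes "is_vec_norm N" and "is_eigenvalue_R m C n a mm B z"
    and "\<forall>j\<in>{1..n}. cmod (a j) < cmod z"
  shows "qfun (induced_norm N) m C n a mm B (cmod z) \<le> 0"
proof -
  let ?x = "cmod z" and ?nrm = "induced_norm N"
  obtain v where "v \<noteq> 0" and v: "Rmat m C n a mm B z *v v = 0"
    using assms(2) unfolding is_eigenvalue_R_def by blast
  define P where "P = (\<Sum>i<m. z ^ i *s (C i *v v))"
  define Q where "Q = (\<Sum>j=1..n. \<Sum>k=1..mm j. (1 / (z - a j) ^ k) *s (B j k *v v))"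
  have "?x ^ m * N v = N (z ^ m *s v)"
    by (simp add: vec_norm_scale[OF assms(1)] norm_power)
  also have "z ^ m *s v = P - Q"
    using v unfolding Rmat_mult_vec P_def Q_def by (simp add: algebra_simps)
  also have "N (P - Q) \<le> N P + N Q"
    by (rule vec_norm_diff_triangle[OF assms(1)])
  also have "N P \<le> (\<Sum>i<m. ?nrm (C i) * ?x ^ i * N v)"
    unfolding P_def
  proof (rule vec_norm_sum_le[OF assms(1)])
    fix i
    show "N (z ^ i *s (C i *v v)) \<le> ?nrm (C i) * ?x ^ i * N v"
      using mult_left_mono[OF induced_norm_bound[OF assms(1), of "C i" v], of "?x ^ i"]
      by (simp add: vec_norm_scale[OF assms(1)] norm_power mult_ac)
  qed
  also have "N Q \<le> (\<Sum>j=1..n. \<Sum>k=1..mm j. ?nrm (B j k) / (?x - cmod (a j)) ^ k * N v)"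
    unfolding Q_def
    using assms(3) by (intro vec_norm_sum_le[OF assms(1)] pole_term_bound[OF assms(1)]) auto
  finally have "?x ^ m * N v \<le> ((\<Sum>i<m. ?nrm (C i) * ?x ^ i)
      + (\<Sum>j=1..n. \<Sum>k=1..mm j. ?nrm (B j k) / (?x - cmod (a j)) ^ k)) * N v"
    by (simp add: sum_distrib_right distrib_right)
  then show ?thesis
    using vec_norm_pos[OF assms(1) \<open>v \<noteq> 0\<close>] by (simp add: qfun_def)
qed

lemma qfun_pos_beyond_root:
  assumes nonneg: "\<And>A. 0 \<le> nrm A" and "m \<ge> 1" and "0 < R"
    and poles: "\<forall>j\<in>{1..n}. cmod (a j) < R"
    and root: "0 \<le> qfun nrm m C n a mm B R" and "R < x"
  shows "0 < qfun nrm m C n a mm B x"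
proof (rule ccontr)
  assume "\<not> 0 < qfun nrm m C n a mm B x"
  define SC where "SC y = (\<Sum>i<m. nrm (C i) * y ^ i)" for y
  define SB where "SB y = (\<Sum>j=1..n. \<Sum>k=1..mm j. nrm (B j k) / (y - cmod (a j)) ^ k)" for y
  define s where "s = x / R"
  have "1 \<le> s" and x: "x = s * R"
    using \<open>0 < R\<close> \<open>R < x\<close> by (simp_all add: s_def)
  have SC: "SC x \<le> s ^ (m - 1) * SC R"
    unfolding SC_def sum_distrib_left
  proof (rule sum_mono)
    fix i assume "i \<in> {..<m}"
    then have "s ^ i * R ^ i \<le> s ^ (m - 1) * R ^ i"
      using \<open>1 \<le> s\<close> \<open>0 < R\<close> by (intro mult_right_mono power_increasing) auto
    then have "nrm (C i) * (s ^ i * R ^ i) \<le> nrm (C i) * (s ^ (m - 1) * R ^ i)"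
      by (rule mult_left_mono) (rule nonneg)
    then show "nrm (C i) * x ^ i \<le> s ^ (m - 1) * (nrm (C i) * R ^ i)"
      by (simp add: x power_mult_distrib mult_ac)
  qed
  have SB: "SB x \<le> s ^ (m - 1) * SB R"
  proof -
    have "SB x \<le> SB R"
      unfolding SB_def
    proof (intro sum_mono)
      fix j k assume "j \<in> {1..n}"
      then have "0 < R - cmod (a j)"
        using poles by auto
      then show "nrm (B j k) / (x - cmod (a j)) ^ k \<le> nrm (B j k) / (R - cmod (a j)) ^ k"
        using \<open>R < x\<close> by (intro divide_left_mono power_mono nonneg) auto
    qed
    moreover have "0 \<le> SB R"
      unfolding SB_def using poles by (intro sum_nonneg divide_nonneg_pos nonneg) auto
    then have "SB R \<le> s ^ (m - 1) * SB R"
      using \<open>1 \<le> s\<close> by (simp add: one_le_power mult_le_cancel_right1)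
    ultimately show ?thesis
      by linarith
  qed
  have "x ^ m \<le> SC x + SB x"
    using \<open>\<not> 0 < qfun nrm m C n a mm B x\<close> by (simp add: qfun_def SC_def SB_def)
  also have "\<dots> \<le> s ^ (m - 1) * (SC R + SB R)"
    using SC SB by (simp add: distrib_left)
  also have "\<dots> \<le> s ^ (m - 1) * R ^ m"
    using root \<open>1 \<le> s\<close> by (intro mult_left_mono) (simp_all add: qfun_def SC_def SB_def)
  also have "\<dots> = x ^ (m - 1) * R"
    using \<open>m \<ge> 1\<close> by (simp add: x power_mult_distrib power_eq_if[of R m] mult_ac)
  finally have "x ^ (m - 1) * x \<le> x ^ (m - 1) * R"
    using \<open>m \<ge> 1\<close> by (simp add: power_eq_if[of x m] mult_ac)
  then show False
    using \<open>0 < R\<close> \<open>R < x\<close> by (simp add: mult_le_cancel_left_pos)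
qed

theorem theorem3p8:
  fixes C :: "nat \<Rightarrow> complex^'p^'p" and B :: "nat \<Rightarrow> nat \<Rightarrow> complex^'p^'p"
    and a :: "nat \<Rightarrow> complex" and mm :: "nat \<Rightarrow> nat" and m n :: nat
    and N :: "complex^'p \<Rightarrow> real" and lam0 :: complex and R :: real
  assumes "m \<ge> 1" and "n \<ge> 1"
    and "inj_on a {1..n}"
    and "\<forall>j\<in>{1..n}. mm j \<ge> 1"
    and "is_vec_norm N"
    and "is_eigenvalue_R m C n a mm B lam0"
    and "qfun (induced_norm N) m C n a mm B R = 0"
    and "\<forall>j\<in>{1..n}. cmod (a j) < R"
  shows "cmod lam0 \<le> R"
proof (rule ccontr)
  assume "\<not> cmod lam0 \<le> R"
  have "0 < R"
    using assms(2,8) norm_ge_zero[of "a 1"] by (meson atLeastAtMost_iff le_refl order_le_less_trans)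
  have "\<forall>j\<in>{1..n}. cmod (a j) < cmod lam0"
    using assms(8) \<open>\<not> cmod lam0 \<le> R\<close> by fastforce
  then have "qfun (induced_norm N) m C n a mm B (cmod lam0) \<le> 0"
    using eigenvalue_qfun_nonpos assms(5,6) by blast
  moreover have "0 < qfun (induced_norm N) m C n a mm B (cmod lam0)"
    using assms(1,7,8) \<open>0 < R\<close> \<open>\<not> cmod lam0 \<le> R\<close>
    by (intro qfun_pos_beyond_root[where R = R] induced_norm_nonneg[OF assms(5)]) auto
  ultimately show False
    by simp
qed

end
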